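(* Let $I\subseteq[0,\infty)$ be an interval, let $f:I\to\mathbb{R}$ be twice differentiable on $I^\circ$, and let $a,b\in I^\circ$ with $a<b$ such that $f''\in L^1[a,b]$. Let $q\ge1$ and assume $|f''|^q$ is quasi-convex on $[a,b]$. Let $d: a=x_0<x_1<\dots<x_n=b$ be a partition of $[a,b]$, let $T(f,d)=\sum_{i=0}^{n-1}\frac{f(x_i)+f(x_{i+1})}{2}(x_{i+1}-x_i)$ and $E(f,d)=\int_a^b f(x)\,dx-T(f,d)$. Then $$|E(f,d)|\le \frac14\left(\frac{2}{(q+1)(q+2)}\right)^{\frac1q}\sum_{i=0}^{n-1}(x_{i+1}-x_i)^3\left(\max\{|f''(x_i)|^q,|f''(x_{i+1})|^q\}\right)^{\frac1q}.$$
   Context: A function $g:[a,b]\to\mathbb{R}$ is quasi-convex on $[a,b]$ if $g(\lambda x+(1-\lambda)y)\le\max\{g(x),g(y)\}$ for all $x,y\in[a,b]$ and $\lambda\in[0,1]$. *)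

theory Defs
  imports "HOL-Analysis.Analysis"
begin

definition quasi_convex_on :: "real set \<Rightarrow> (real \<Rightarrow> real) \<Rightarrow> bool" where
  "quasi_convex_on S g \<longleftrightarrow>
     (\<forall>x\<in>S. \<forall>y\<in>S. \<forall>l::real. 0 \<le> l \<and> l \<le> 1 \<longrightarrow>
        g (l * x + (1 - l) * y) \<le> max (g x) (g y))"

definition trap_sum :: "(real \<Rightarrow> real) \<Rightarrow> (nat \<Rightarrow> real) \<Rightarrow> nat \<Rightarrow> real" where
  "trap_sum f x n = (\<Sum>i<n. (f (x i) + f (x (Suc i))) / 2 * (x (Suc i) - x i))"

definition trap_err :: "(real \<Rightarrow> real) \<Rightarrow> (nat \<Rightarrow> real) \<Rightarrow> nat \<Rightarrow> real" where
  "trap_err f x n = integral {x 0..x n} f - trap_sum f x n"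

end

theory Submission imports Defs begin

(* On each cell [x_i, x_(i+1)] of the partition the classical
   trapezoid estimate  |int f - (f x_i + f x_(i+1))/2 h| <= K h^3/12  holds for any
   bound K of |f''| on the cell (proved by two monotonicity arguments, without
   integrating f'').  Quasi-convexity of |f''|^q gives the cell bound
   K_i = max(|f''(x_i)|^q, |f''(x_(i+1))|^q)^(1/q).  Summing over the cells bounds
   |E(f,d)| by  sum K_i h_i^3/12,  and this is at most the claimed right-hand side
   because the constant satisfies  (2/((q+1)(q+2)))^(1/q) >= 1/3  for q >= 1,
   i.e. 1/12 <= 1/4 * (2/((q+1)(q+2)))^(1/q). *)

text \<open>The auxiliary function g has derivative h/2, and h is
  nonnegative since its derivative (K - f'')(t - c) is.\<close>
lemma trapezoid_error_lower:
  fixes f f' f'' :: "real \<Rightarrow> real" and c d K :: real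
  assumes cd: "c \<le> d"
    and d1: "\<And>t. t \<in> {c..d} \<Longrightarrow> (f has_real_derivative f' t) (at t)"
    and d2: "\<And>t. t \<in> {c..d} \<Longrightarrow> (f' has_real_derivative f'' t) (at t)"
    and K: "\<And>t. t \<in> {c..d} \<Longrightarrow> f'' t \<le> K"
  shows "0 \<le> integral {c..d} f - (f c + f d) / 2 * (d - c) + K * (d - c) ^ 3 / 12"
proof -
  define h where "h t = f t - f c - f' t * (t - c) + K * (t - c)^2 / 2" for t
  have contf: "continuous_on {c..d} f"
    using d1 by (meson DERIV_isCont continuous_at_imp_continuous_on)
  have h_deriv: "(h has_real_derivative (K - f'' t) * (t - c)) (at t)" if "t \<in> {c..d}" for t
  proof -
    have "((\<lambda>t. K * (t - c)^2 / 2) has_real_derivative K * (t - c)) (at t)"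
      by (auto intro!: derivative_eq_intros simp: field_simps)
    then show ?thesis
      unfolding h_def
      by (rule DERIV_cong[OF DERIV_add[OF DERIV_diff[OF DERIV_diff[OF d1[OF that] DERIV_const]
            DERIV_mult[OF d2[OF that] DERIV_diff[OF DERIV_ident DERIV_const]]]]])
         (simp add: algebra_simps)
  qed
  have h_nonneg: "0 \<le> h t" if t: "t \<in> {c..d}" for t
  proof -
    have "h c \<le> h t"
    proof (rule DERIV_nonneg_imp_increasing_open[of c t])
      show "c \<le> t" using t by auto
      fix y assume "c < y" "y < t"
      with t K h_deriv show "\<exists>z. (h has_real_derivative z) (at y) \<and> 0 \<le> z"
        by (intro exI[of _ "(K - f'' y) * (y - c)"]) auto
    next
      show "continuous_on {c..t} h"
        using h_deriv t by (intro continuous_at_imp_continuous_on ballI DERIV_isCont) (auto intro: h_deriv)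
    qed
    then show ?thesis by (simp add: h_def)
  qed
  define g where "g t = integral {c..t} f - (f c + f t) / 2 * (t - c) + K * (t - c) ^ 3 / 12" for t
  have g_deriv: "(g has_real_derivative h t / 2) (at t within {c..d})" if "t \<in> {c..d}" for t
  proof -
    have cubic: "((\<lambda>t. K * (t - c)^3 / 12) has_real_derivative K * (t - c)^2 / 4) (at t within {c..d})"
      by (auto intro!: derivative_eq_intros simp: field_simps)
    have trap: "((\<lambda>t. (f c + f t) / 2 * (t - c)) has_real_derivative
                  f' t / 2 * (t - c) + (f c + f t) / 2) (at t within {c..d})"
      by (auto intro!: derivative_eq_intros DERIV_subset[OF d1[OF that]])
    show ?thesis
      unfolding g_def
      by (rule DERIV_cong[OF DERIV_add[OF DERIV_diff[OF integral_has_real_derivative[OF contf that] trap] cubic]])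
         (simp add: h_def field_simps power2_eq_square)
  qed
  have "g c \<le> g d"
  proof (rule DERIV_nonneg_imp_increasing_open[OF cd])
    fix y assume y: "c < y" "y < d"
    then have "at y within {c..d} = at y" by (intro at_within_interior) auto
    with y g_deriv[of y] h_nonneg[of y] show "\<exists>z. (g has_real_derivative z) (at y) \<and> 0 \<le> z"
      by (intro exI[of _ "h y / 2"]) auto
  next
    show "continuous_on {c..d} g"
      using g_deriv by (meson DERIV_continuous continuous_on_eq_continuous_within)
  qed
  then show ?thesis by (simp add: g_def)
qed

lemma trapezoid_error_bound:
  fixes f f' f'' :: "real \<Rightarrow> real" and c d K :: real
  assumes cd: "c \<le> d"
    and d1: "\<And>t. t \<in> {c..d} \<Longrightarrow> (f has_real_derivative f' t) (at t)"
    and d2: "\<And>t. t \<in> {c..d} \<Longrightarrow> (f' has_real_derivative f'' t) (at t)"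
    and K: "\<And>t. t \<in> {c..d} \<Longrightarrow> \<bar>f'' t\<bar> \<le> K"
  shows "\<bar>integral {c..d} f - (f c + f d) / 2 * (d - c)\<bar> \<le> K * (d - c) ^ 3 / 12"
proof -
  have upper: "0 \<le> integral {c..d} f - (f c + f d) / 2 * (d - c) + K * (d - c) ^ 3 / 12"
    using K by (intro trapezoid_error_lower[OF cd d1 d2]) (auto simp: abs_le_iff)
  have "0 \<le> integral {c..d} (\<lambda>t. - f t) - (- f c + - f d) / 2 * (d - c) + K * (d - c) ^ 3 / 12"
    using K by (intro trapezoid_error_lower[OF cd, of _ "\<lambda>t. - f' t" "\<lambda>t. - f'' t"])
      (auto simp: abs_le_iff intro!: DERIV_minus[OF d1] DERIV_minus[OF d2])
  then have lower: "0 \<le> - integral {c..d} f + (f c + f d) / 2 * (d - c) + K * (d - c) ^ 3 / 12"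
    by (simp add: field_simps)
  from upper lower show ?thesis by (simp only: abs_le_iff) linarith
qed

lemma partition_mono:
  fixes x :: "nat \<Rightarrow> real"
  assumes step: "\<And>i. i < n \<Longrightarrow> x i \<le> x (Suc i)" and "i \<le> j" "j \<le> n"
  shows "x i \<le> x j"
  using \<open>i \<le> j\<close> \<open>j \<le> n\<close>
proof (induction j rule: dec_induct)
  case (step j)
  then show ?case using assms(1)[of j] by simp
qed simp

lemma integral_partition_sum:
  fixes f :: "real \<Rightarrow> real" and x :: "nat \<Rightarrow> real"
  assumes step: "\<And>i. i < n \<Longrightarrow> x i \<le> x (Suc i)"
    and intf: "f integrable_on {x 0..x n}"
  shows "integral {x 0..x n} f = (\<Sum>i<n. integral {x i..x (Suc i)} f)"
proof -
  have "integral {x 0..x m} f = (\<Sum>i<m. integral {x i..x (Suc i)} f)" if "m \<le> n" for m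
    using that
  proof (induction m)
    case (Suc m)
    have ord: "x 0 \<le> x m" "x m \<le> x (Suc m)" "x (Suc m) \<le> x n"
      using partition_mono[where n=n and x=x, OF step] Suc.prems by auto
    have "f integrable_on {x 0..x (Suc m)}"
      using ord partition_mono[where n=n and x=x, OF step, of 0 m]
      by (intro integrable_subinterval_real[OF intf]) auto
    then have "integral {x 0..x (Suc m)} f = integral {x 0..x m} f + integral {x m..x (Suc m)} f"
      using ord by (intro Henstock_Kurzweil_Integration.integral_combine[symmetric]) auto
    then show ?case using Suc by simp
  qed simp
  then show ?thesis by simp
qed

lemma composite_trapezoid_error:
  fixes f f' f'' :: "real \<Rightarrow> real" and x :: "nat \<Rightarrow> real" and K :: "nat \<Rightarrow> real"
  assumes step: "\<And>i. i < n \<Longrightarrow> x i \<le> x (Suc i)"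
    and d1: "\<And>t. t \<in> {x 0..x n} \<Longrightarrow> (f has_real_derivative f' t) (at t)"
    and d2: "\<And>t. t \<in> {x 0..x n} \<Longrightarrow> (f' has_real_derivative f'' t) (at t)"
    and K: "\<And>i t. i < n \<Longrightarrow> t \<in> {x i..x (Suc i)} \<Longrightarrow> \<bar>f'' t\<bar> \<le> K i"
  shows "\<bar>trap_err f x n\<bar> \<le> (\<Sum>i<n. K i * (x (Suc i) - x i) ^ 3 / 12)"
proof -
  have cell_in_range: "{x i..x (Suc i)} \<subseteq> {x 0..x n}" if "i < n" for i
    using that partition_mono[where n=n and x=x, OF step, of 0 i] partition_mono[where n=n and x=x, OF step, of "Suc i" n] by auto
  have "f integrable_on {x 0..x n}"
    using d1 by (intro integrable_continuous_real continuous_at_imp_continuous_on ballI DERIV_isCont) auto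
  then have "trap_err f x n = (\<Sum>i<n. integral {x i..x (Suc i)} f
                                     - (f (x i) + f (x (Suc i))) / 2 * (x (Suc i) - x i))"
    unfolding trap_err_def trap_sum_def by (simp add: integral_partition_sum[where n=n and x=x, OF step] sum_subtractf)
  also have "\<bar>\<dots>\<bar> \<le> (\<Sum>i<n. \<bar>integral {x i..x (Suc i)} f
                                 - (f (x i) + f (x (Suc i))) / 2 * (x (Suc i) - x i)\<bar>)"
    by (rule sum_abs)
  also have "\<dots> \<le> (\<Sum>i<n. K i * (x (Suc i) - x i) ^ 3 / 12)"
    using step K cell_in_range d1 d2
    by (intro sum_mono trapezoid_error_bound[where f'=f' and f''=f'']) (auto simp: subset_iff)
  finally show ?thesis .
qed

lemma quasi_convex_on_le_max:
  fixes g :: "real \<Rightarrow> real"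
  assumes qc: "quasi_convex_on S g" and cd: "c \<in> S" "d \<in> S" and t: "t \<in> {c..d}"
  shows "g t \<le> max (g c) (g d)"
proof (cases "c = d")
  case True
  with t show ?thesis by simp
next
  case False
  with t have "c < d" by auto
  define l where "l = (d - t) / (d - c)"
  have l: "0 \<le> l" "l \<le> 1" using t \<open>c < d\<close> by (auto simp: l_def divide_simps)
  have "l * c + (1 - l) * d = d - l * (d - c)" by (simp add: algebra_simps)
  then have "t = l * c + (1 - l) * d" using \<open>c < d\<close> by (simp add: l_def)
  with qc cd l show ?thesis unfolding quasi_convex_on_def by simp
qed

lemma quasi_convex_powr_bound:
  fixes h :: "real \<Rightarrow> real" and q :: real
  assumes q: "q > 0" and qc: "quasi_convex_on S (\<lambda>t. \<bar>h t\<bar> powr q)"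
    and cd: "c \<in> S" "d \<in> S" and t: "t \<in> {c..d}"
  shows "\<bar>h t\<bar> \<le> (max (\<bar>h c\<bar> powr q) (\<bar>h d\<bar> powr q)) powr (1 / q)"
proof -
  have "\<bar>h t\<bar> = (\<bar>h t\<bar> powr q) powr (1 / q)"
    using q by (simp add: powr_powr)
  also have "\<dots> \<le> (max (\<bar>h c\<bar> powr q) (\<bar>h d\<bar> powr q)) powr (1 / q)"
    using q quasi_convex_on_le_max[OF qc cd t] by (intro powr_mono2) auto
  finally show ?thesis .
qed

text \<open>For q \<ge> 1 we have (q+1)(q+2)/2 \<le> 3^q: writing q = 1 + s, this follows from
  3^s = exp (s ln 3) \<ge> 1 + s + s^2/2 because ln 3 > 1.\<close>
lemma binomial_le_three_powr:
  fixes q :: real assumes q: "q \<ge> 1"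
  shows "(q + 1) * (q + 2) / 2 \<le> 3 powr q"
proof -
  define s where "s = q - 1"
  define L where "L = ln (3::real)"
  have s: "s \<ge> 0" and L: "L > 1"
    using q ln3_gt_1 by (simp_all add: s_def L_def)
  have three_powr: "3 powr q = 3 * exp (s * L)"
    by (simp add: powr_def s_def L_def algebra_simps exp_diff)
  have "s \<le> s * L" using s L by (simp add: mult_le_cancel_left1)
  moreover from this have "s^2 \<le> (s * L)^2" using s by (intro power_mono) auto
  ultimately have "1 + s + s^2/2 \<le> 1 + s * L + (s * L)^2 / 2" by simp
  also have "\<dots> \<le> exp (s * L)"
    using s L by (intro exp_lower_Taylor_quadratic) simp
  finally have exp_bound: "1 + s + s^2/2 \<le> exp (s * L)" .
  have "(q + 1) * (q + 2) / 2 = 3 + 5/2 * s + s^2/2"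
    by (simp add: s_def power2_eq_square field_simps)
  also have "\<dots> \<le> 3 * (1 + s + s^2/2)" using s by (simp add: power2_eq_square field_simps)
  also have "\<dots> \<le> 3 powr q" unfolding three_powr using exp_bound by simp
  finally show ?thesis .
qed

lemma constant_ge_one_third:
  fixes q :: real assumes q: "q \<ge> 1"
  shows "1/3 \<le> (2 / ((q + 1) * (q + 2))) powr (1 / q)"
proof -
  have "(1/3) powr q = 1 / 3 powr q" by (simp add: powr_divide)
  also have "\<dots> \<le> 2 / ((q + 1) * (q + 2))"
    using binomial_le_three_powr[OF q] q by (simp add: divide_simps)
  finally have le: "(1/3) powr q \<le> 2 / ((q + 1) * (q + 2))" .
  have "1/3 = ((1/3) powr q) powr (1/q)"
    using q by (simp add: powr_powr)
  also have "\<dots> \<le> (2 / ((q + 1) * (q + 2))) powr (1 / q)"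
    using le q by (intro powr_mono2) auto
  finally show ?thesis .
qed

theorem proposition3:
  fixes I :: "real set" and f f' f'' :: "real \<Rightarrow> real" and a b q :: real
    and x :: "nat \<Rightarrow> real" and n :: nat
  assumes I_int: "is_interval I" and I_nonneg: "I \<subseteq> {0..}"
    and f': "\<And>t. t \<in> interior I \<Longrightarrow> (f has_real_derivative f' t) (at t)"
    and f'': "\<And>t. t \<in> interior I \<Longrightarrow> (f' has_real_derivative f'' t) (at t)"
    and a: "a \<in> interior I" and b: "b \<in> interior I" and ab: "a < b"
    and L1: "f'' absolutely_integrable_on {a..b}"
    and q: "q \<ge> 1"
    and qc: "quasi_convex_on {a..b} (\<lambda>t. \<bar>f'' t\<bar> powr q)"
    and n: "n \<ge> 1" and x0: "x 0 = a" and xn: "x n = b"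
    and xmono: "\<And>i. i < n \<Longrightarrow> x i < x (Suc i)"
  shows "\<bar>trap_err f x n\<bar> \<le> 1/4 * (2 / ((q + 1) * (q + 2))) powr (1 / q) *
           (\<Sum>i<n. (x (Suc i) - x i) ^ 3 *
              (max (\<bar>f'' (x i)\<bar> powr q) (\<bar>f'' (x (Suc i))\<bar> powr q)) powr (1 / q))"
proof -
  define C where "C = (2 / ((q + 1) * (q + 2))) powr (1 / q)"
  have C: "1/3 \<le> C" unfolding C_def by (rule constant_ge_one_third[OF q])
  define K where "K i = (max (\<bar>f'' (x i)\<bar> powr q) (\<bar>f'' (x (Suc i))\<bar> powr q)) powr (1 / q)" for i
  have step: "\<And>i. i < n \<Longrightarrow> x i \<le> x (Suc i)" using xmono less_imp_le by blast
  have nodes: "x i \<in> {a..b}" if "i \<le> n" for i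
    using that partition_mono[where n=n and x=x, OF step, of 0 i] partition_mono[where n=n and x=x, OF step, of i n] x0 xn by auto
  have "is_interval (interior I)"
    using I_int by (simp add: is_interval_convex_1)
  then have range: "t \<in> interior I" if "t \<in> {x 0..x n}" for t
    using a b that x0 xn by (intro mem_is_interval_1_I[where S="interior I" and a=a and b=t and c=b]) auto
  have cell_bound: "\<bar>f'' t\<bar> \<le> K i" if "i < n" "t \<in> {x i..x (Suc i)}" for i t
    unfolding K_def using q that nodes[of i] nodes[of "Suc i"]
    by (intro quasi_convex_powr_bound[OF _ qc]) auto
  have "\<bar>trap_err f x n\<bar> \<le> (\<Sum>i<n. K i * (x (Suc i) - x i) ^ 3 / 12)"
    using f' f'' range cell_bound by (intro composite_trapezoid_error[where n=n and x=x, OF step]) auto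
  also have "\<dots> \<le> (\<Sum>i<n. 1/4 * C * ((x (Suc i) - x i) ^ 3 * K i))"
  proof (intro sum_mono)
    fix i assume "i \<in> {..<n}"
    then have "0 \<le> (x (Suc i) - x i) ^ 3 * K i" using step by (simp add: K_def)
    then show "K i * (x (Suc i) - x i) ^ 3 / 12 \<le> 1/4 * C * ((x (Suc i) - x i) ^ 3 * K i)"
      using mult_right_mono[OF C, of "(x (Suc i) - x i) ^ 3 * K i"] by (simp add: field_simps)
  qed
  finally show ?thesis by (simp add: sum_distrib_left C_def K_def)
qed

end
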